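(* Let $k\ge 2$ be an integer, and let $\alpha>1$ and $C>0$ be real numbers. Let $D:=\{z\in\mathbb{C}: |z|<2\}$. Then there exists a sequence $\{f_n\}_n$ of functions holomorphic in $D$ such that $$\frac{|f_n^{(k)}(z)|}{1+|f_n(z)|^\alpha}\le C \qquad\text{for all } z\in D \text{ and all } n,$$ but $\{f_n\}_n$ is not quasi-normal in $D$.
   Context: A family $\mathcal{F}$ of meromorphic functions in a domain $D\subseteq\mathbb{C}$ is called quasi-normal if from each sequence $\{f_n\}_n$ in $\mathcal{F}$ one can extract a subsequence which converges locally uniformly (with respect to the spherical metric, the limit $\infty$ being allowed) on $D\setminus E$, where the set $E$ (which may depend on the sequence) has no accumulation point in $D$. A sequence is called quasi-normal if the family of its members is quasi-normal. *)

theory Defs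
  imports "HOL-Analysis.Analysis"
begin

text \<open>Points of the Riemann sphere: Some z is the finite point z, None is infinity.
  The chordal (spherical) metric on the Riemann sphere.\<close>
fun chordal :: "complex option \<Rightarrow> complex option \<Rightarrow> real" where
  "chordal (Some a) (Some b) = cmod (a - b) / (sqrt (1 + (cmod a)^2) * sqrt (1 + (cmod b)^2))"
| "chordal (Some a) None = 1 / sqrt (1 + (cmod a)^2)"
| "chordal None (Some b) = 1 / sqrt (1 + (cmod b)^2)"
| "chordal None None = 0"

definition sph_loc_unif_conv ::
  "(nat \<Rightarrow> complex \<Rightarrow> complex option) \<Rightarrow> (complex \<Rightarrow> complex option) \<Rightarrow> complex set \<Rightarrow> bool" where
  "sph_loc_unif_conv g h S \<longleftrightarrow>
     (\<forall>K. compact K \<and> K \<subseteq> S \<longrightarrow>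
        (\<forall>e>0. \<forall>\<^sub>F n in sequentially. \<forall>z\<in>K. chordal (g n z) (h z) < e))"

definition quasi_normal :: "(complex \<Rightarrow> complex) set \<Rightarrow> complex set \<Rightarrow> bool" where
  "quasi_normal F D \<longleftrightarrow>
     (\<forall>f::nat \<Rightarrow> complex \<Rightarrow> complex. (\<forall>n. f n \<in> F) \<longrightarrow>
        (\<exists>r E h. strict_mono r \<and> (\<forall>z\<in>D. \<not> z islimpt E) \<and>
           sph_loc_unif_conv (\<lambda>n z. Some (f (r n) z)) h (D - E)))"

end

theory Submission
  imports Defs "HOL-Complex_Analysis.Complex_Analysis"
begin

text \<open>Take \<open>f\<^sub>n(z) = B\<^sub>n \<Psi>(n z)\<close> with \<open>\<Psi>(w) = sin w \<cdot> exp (b sin\<^sup>2\<^sup>s w)\<close>, \<open>s = \<lfloor>k/2\<rfloor>\<close>, where \<open>b\<close>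
  cancels the Taylor coefficient of \<open>w\<^sup>2\<^sup>s\<^sup>+\<^sup>1\<close>. As \<open>\<Psi>\<close> is odd, \<open>\<Psi>\<^sup>(\<^sup>k\<^sup>)\<close> then has a double zero
  at 0, and since \<open>\<Psi>(w + j\<pi>) = \<plusminus>\<Psi>(w)\<close> the same holds at every zero \<open>j\<pi>\<close> of \<open>\<Psi>\<close>, all of which
  are simple; hence \<open>\<bar>\<Psi>\<^sup>(\<^sup>k\<^sup>)\<bar> \<le> M \<bar>\<Psi>\<bar>\<^sup>2\<close> on every disc. This gives
  \<open>\<bar>f\<^sub>n\<^sup>(\<^sup>k\<^sup>)\<bar> \<le> n\<^sup>k M \<bar>f\<^sub>n\<bar>\<^sup>2 / B\<^sub>n\<close>, which lies below \<open>C (1 + \<bar>f\<^sub>n\<bar>\<^sup>\<alpha>)\<close> once \<open>B\<^sub>n\<close> is large,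
  because \<open>\<alpha> > 1\<close> and \<open>\<bar>f\<^sub>n\<bar> \<le> B\<^sub>n sup \<bar>\<Psi>\<bar>\<close>.

  On the other hand, along \<open>[0, 1]\<close> the zeros \<open>j\<pi>/n\<close> of \<open>f\<^sub>n\<close> and the points where \<open>\<bar>f\<^sub>m\<bar> \<ge> 10\<close>
  interleave at every scale, so no subsequence converges spherically on a disc centred on the
  segment; an exceptional set without accumulation points misses such a disc.\<close>

section \<open>Estimates for entire functions and their rescalings\<close>

lemma entire_taylor_remainder_quadratic:
  assumes g: "g holomorphic_on UNIV"
  shows "\<exists>A\<ge>0. \<forall>t. cmod t \<le> 1 \<longrightarrow> cmod (g t - g 0 - deriv g 0 * t) \<le> A * cmod t ^ 2"
proof -
  have "continuous_on (cball 0 1) ((deriv ^^ 2) g)"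
    by (intro holomorphic_on_imp_continuous_on holomorphic_on_subset[OF holomorphic_higher_deriv[OF g open_UNIV]]) auto
  hence "bounded ((deriv ^^ 2) g ` cball 0 1)"
    by (intro compact_imp_bounded compact_continuous_image) auto
  then obtain A where A: "\<And>x. x \<in> cball 0 1 \<Longrightarrow> cmod ((deriv ^^ 2) g x) \<le> A"
    unfolding bounded_iff by blast
  have "cmod ((\<lambda>i. (deriv ^^ i) g) 0 t - (\<Sum>i\<le>1. (deriv ^^ i) g 0 * (t - 0) ^ i / fact i))
          \<le> A * cmod (t - 0) ^ Suc 1 / fact 1"
    if "cmod t \<le> 1" for t
  proof (rule complex_Taylor[of "cball 0 1"])
    fix i :: nat and x :: complex
    show "((deriv ^^ i) g has_field_derivative (deriv ^^ Suc i) g x) (at x within cball 0 1)"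
      using has_field_derivative_higher_deriv[OF g open_UNIV, of x i] by (auto intro: has_field_derivative_at_within)
  qed (use that A in \<open>auto simp: numeral_2_eq_2\<close>)
  moreover have "A \<ge> 0" using order_trans[OF norm_ge_zero A[of 0]] by simp
  ultimately show ?thesis
    by (auto simp: numeral_2_eq_2 algebra_simps)
qed

text \<open>Near a simple zero of \<open>g\<close>, \<open>\<bar>g t\<bar>\<close> is comparable to \<open>\<bar>t\<bar>\<close>, while a double zero of \<open>h\<close>
  gives \<open>\<bar>h t\<bar> = O(\<bar>t\<bar>\<^sup>2)\<close>.\<close>
lemma quadratic_bound_near_simple_zero:
  assumes g: "g holomorphic_on UNIV" and h: "h holomorphic_on UNIV"
    and "g 0 = 0" "deriv g 0 \<noteq> 0" "h 0 = 0" "deriv h 0 = 0"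
  shows "\<exists>\<delta>>0. \<exists>A\<ge>0. \<forall>t. cmod t \<le> \<delta> \<longrightarrow> cmod (h t) \<le> A * cmod (g t) ^ 2"
proof -
  obtain A where A0: "A \<ge> 0" and A: "\<And>t. cmod t \<le> 1 \<Longrightarrow> cmod (h t) \<le> A * cmod t ^ 2"
    using entire_taylor_remainder_quadratic[OF h] assms by auto
  obtain A' where A'0: "A' \<ge> 0" and A': "\<And>t. cmod t \<le> 1 \<Longrightarrow> cmod (g t - deriv g 0 * t) \<le> A' * cmod t ^ 2"
    using entire_taylor_remainder_quadratic[OF g] assms by auto
  define c where "c = cmod (deriv g 0)"
  have c: "c > 0" using assms by (simp add: c_def)
  define \<delta> where "\<delta> = min 1 (c / (2 * A' + 2))"
  have \<delta>: "\<delta> > 0" "\<delta> \<le> 1" "A' * \<delta> \<le> c / 2"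
    using A'0 c by (auto simp: \<delta>_def min_def field_simps)
  have "cmod (h t) \<le> (4 * A / c\<^sup>2) * cmod (g t) ^ 2" if t: "cmod t \<le> \<delta>" for t
  proof -
    have "A' * cmod t ^ 2 \<le> (A' * \<delta>) * cmod t"
      using mult_left_mono[OF mult_right_mono[OF t norm_ge_zero] A'0]
      by (simp add: power2_eq_square mult.assoc)
    also have "\<dots> \<le> c / 2 * cmod t" using \<delta>(3) by (rule mult_right_mono) simp
    finally have "cmod (g t - deriv g 0 * t) \<le> c / 2 * cmod t"
      using A'[of t] t \<delta>(2) by simp
    moreover have "c * cmod t \<le> cmod (g t) + cmod (g t - deriv g 0 * t)"
      using norm_triangle_ineq2[of "deriv g 0 * t" "deriv g 0 * t - g t"]
      by (simp add: c_def norm_mult norm_minus_commute)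
    ultimately have "cmod t \<le> 2 / c * cmod (g t)" using c by (simp add: field_simps)
    hence "cmod t ^ 2 \<le> (2 / c * cmod (g t)) ^ 2" by (simp add: power_mono)
    hence "A * cmod t ^ 2 \<le> A * (2 / c * cmod (g t)) ^ 2" using A0 by (intro mult_left_mono)
    thus ?thesis using A[of t] t \<delta>(2) by (simp add: power_mult_distrib field_simps)
  qed
  moreover have "4 * A / c\<^sup>2 \<ge> 0" using A0 by simp
  ultimately show ?thesis using \<delta>(1) by blast
qed

lemma higher_deriv_shift_eq_cmult:
  assumes f: "f holomorphic_on UNIV" and shift: "\<And>w. f (w + c) = a * f w"
  shows "(deriv ^^ n) f (t + c) = a * (deriv ^^ n) f t"
proof -
  have "(deriv ^^ n) (\<lambda>w. f (1 * w + c)) t = 1 ^ n * (deriv ^^ n) f (1 * t + c)"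
    by (rule higher_deriv_compose_linear'[OF f open_UNIV open_UNIV]) auto
  hence "(deriv ^^ n) f (t + c) = (deriv ^^ n) (\<lambda>w. a * f w) t"
    by (simp add: shift)
  also have "\<dots> = a * (deriv ^^ n) f t"
    by (rule higher_deriv_cmult[OF f]) auto
  finally show ?thesis .
qed

lemma compact_bound_by_square:
  assumes "compact K" "continuous_on K f" "continuous_on K g" "\<And>w. w \<in> K \<Longrightarrow> g w \<noteq> 0"
  shows "\<exists>M\<ge>0. \<forall>w\<in>K. cmod (f w) \<le> M * cmod (g w) ^ 2"
proof -
  have "continuous_on K (\<lambda>w. cmod (f w) / cmod (g w) ^ 2)"
    using assms by (intro continuous_intros) auto
  hence "bounded ((\<lambda>w. cmod (f w) / cmod (g w) ^ 2) ` K)"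
    by (intro compact_imp_bounded compact_continuous_image assms(1))
  then obtain M where M: "\<And>w. w \<in> K \<Longrightarrow> cmod (f w) / cmod (g w) ^ 2 \<le> M"
    by (auto simp: bounded_iff)
  have "cmod (f w) \<le> max M 0 * cmod (g w) ^ 2" if "w \<in> K" for w
  proof -
    have "cmod (f w) \<le> M * cmod (g w) ^ 2"
      using M[OF that] assms(4)[OF that] by (simp add: divide_le_eq)
    also have "\<dots> \<le> max M 0 * cmod (g w) ^ 2" by (simp add: mult_right_mono)
    finally show ?thesis .
  qed
  thus ?thesis by (intro exI[of _ "max M 0"]) auto
qed

lemma holomorphic_on_rescale:
  assumes "g holomorphic_on UNIV"
  shows "(\<lambda>z. g (c * z)) holomorphic_on A"
  using holomorphic_on_compose[of "\<lambda>z. c * z" A g] holomorphic_on_subset[OF assms]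
  by (auto simp: o_def intro: holomorphic_intros)

lemma higher_deriv_rescale:
  assumes "g holomorphic_on UNIV"
  shows "(deriv ^^ k) (\<lambda>z. a * g (c * z)) z = a * (c ^ k * (deriv ^^ k) g (c * z))"
proof -
  have "(\<lambda>z. g (c * z)) holomorphic_on UNIV" by (rule holomorphic_on_rescale[OF assms])
  hence "(deriv ^^ k) (\<lambda>z. a * g (c * z)) z = a * (deriv ^^ k) (\<lambda>z. g (c * z)) z"
    by (rule higher_deriv_cmult) auto
  also have "(deriv ^^ k) (\<lambda>z. g (c * z)) z = c ^ k * (deriv ^^ k) g (c * z)"
    by (rule higher_deriv_compose_linear[OF assms open_UNIV open_UNIV]) auto
  finally show ?thesis .
qed

text \<open>With \<open>u = B P\<close> the claim reads \<open>X u\<^sup>2 \<le> C B (1 + u\<^sup>\<alpha>)\<close>: for \<open>u \<le> 1\<close> it needs \<open>B \<ge> X/C\<close>,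
  and for \<open>u > 1\<close>, \<open>\<alpha> < 2\<close> it follows from \<open>u\<^sup>2\<^sup>-\<^sup>\<alpha> \<le> (B L)\<^sup>2\<^sup>-\<^sup>\<alpha>\<close> once \<open>B\<^sup>\<alpha>\<^sup>-\<^sup>1 \<ge> X L\<^sup>2\<^sup>-\<^sup>\<alpha>/C\<close>.\<close>
lemma scaled_square_le_powr:
  fixes X C \<alpha> L :: real
  assumes X: "X \<ge> 0" and C: "C > 0" and \<alpha>: "\<alpha> > 1"
  shows "\<exists>B0>0. \<forall>B\<ge>B0. \<forall>P. 0 \<le> P \<longrightarrow> P \<le> L \<longrightarrow> X * B * P ^ 2 \<le> C * (1 + (B * P) powr \<alpha>)"
proof -
  define L' where "L' = max L 1"
  define B0 where "B0 = max 1 (max (X / C) ((X * L' powr (2 - \<alpha>) / C) powr (1 / (\<alpha> - 1))))"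
  have "X * B * P ^ 2 \<le> C * (1 + (B * P) powr \<alpha>)" if B: "B \<ge> B0" and P: "0 \<le> P" "P \<le> L" for B P
  proof -
    define u where "u = B * P"
    have B1: "B \<ge> 1" using B by (simp add: B0_def)
    have "X / C \<le> B" using B by (simp add: B0_def)
    hence XB: "X \<le> C * B" using C by (simp add: divide_le_eq mult.commute)
    have u: "0 \<le> u" "u \<le> B * L'" using P B1 by (auto simp: u_def L'_def intro: mult_left_mono)
    have "X * u ^ 2 \<le> C * B * (1 + u powr \<alpha>)"
    proof (cases "u \<le> 1")
      case True
      hence "u ^ 2 \<le> 1" using u by (simp add: power_le_one)
      hence "X * u ^ 2 \<le> X" using X by (simp add: mult_left_le)
      also have "X \<le> C * B" by (rule XB)
      also have "C * B \<le> C * B * (1 + u powr \<alpha>)" using C B1 by simp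
      finally show ?thesis .
    next
      case False
      have split: "u ^ 2 = u powr (2 - \<alpha>) * u powr \<alpha>"
        using False by (simp add: powr_numeral flip: powr_add)
      have "X * u powr (2 - \<alpha>) \<le> C * B"
      proof (cases "\<alpha> \<ge> 2")
        case True
        hence "u powr (2 - \<alpha>) \<le> u powr 0" using False by (intro powr_mono) auto
        hence "u powr (2 - \<alpha>) \<le> 1" using False by simp
        hence "X * u powr (2 - \<alpha>) \<le> X" using X by (simp add: mult_left_le)
        thus ?thesis using XB by linarith
      next
        case False
        define Y where "Y = X * L' powr (2 - \<alpha>) / C"
        have "Y powr (1 / (\<alpha> - 1)) \<le> B0" unfolding B0_def Y_def by simp
        hence "(Y powr (1 / (\<alpha> - 1))) powr (\<alpha> - 1) \<le> B powr (\<alpha> - 1)"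
          using \<alpha> B by (intro powr_mono2) auto
        moreover have "(Y powr (1 / (\<alpha> - 1))) powr (\<alpha> - 1) = Y"
          using X C \<alpha> by (simp add: powr_powr Y_def)
        ultimately have "X * L' powr (2 - \<alpha>) / C \<le> B powr (\<alpha> - 1)"
          by (simp add: Y_def)
        hence "X * L' powr (2 - \<alpha>) * B powr (2 - \<alpha>) \<le> C * B powr (\<alpha> - 1) * B powr (2 - \<alpha>)"
          using C by (intro mult_right_mono) (auto simp: divide_le_eq mult.commute)
        also have "\<dots> = C * B" using B1 by (simp add: mult.assoc powr_add[symmetric])
        also have "X * L' powr (2 - \<alpha>) * B powr (2 - \<alpha>) = X * (B * L') powr (2 - \<alpha>)"
          using B1 by (simp add: powr_mult L'_def)
        finally have "X * (B * L') powr (2 - \<alpha>) \<le> C * B" .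
        moreover have "u powr (2 - \<alpha>) \<le> (B * L') powr (2 - \<alpha>)"
          using False u by (intro powr_mono2) auto
        ultimately show ?thesis
          using mult_left_mono[OF _ X] by (meson order_trans)
      qed
      hence "X * u ^ 2 \<le> C * B * u powr \<alpha>"
        unfolding split by (metis mult.assoc mult_right_mono powr_ge_zero)
      thus ?thesis using mult_pos_pos[OF C, of B] B1 by (simp add: distrib_left)
    qed
    hence "B * (X * B * P ^ 2) \<le> B * (C * (1 + u powr \<alpha>))"
      by (simp add: u_def power_mult_distrib power2_eq_square mult_ac)
    thus ?thesis using B1 by (simp add: u_def)
  qed
  moreover have "B0 > 0" by (simp add: B0_def)
  ultimately show ?thesis by blast
qed

text \<open>Rescaling turns \<open>\<bar>g\<^sup>(\<^sup>k\<^sup>)\<bar> \<le> M \<bar>g\<bar>\<^sup>2\<close> into \<open>\<bar>f\<^sup>(\<^sup>k\<^sup>)\<bar> \<le> n\<^sup>k M \<bar>f\<bar>\<^sup>2 / B\<close>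
  for \<open>f z = B g (n z)\<close>.\<close>
lemma rescaled_higher_deriv_bound:
  fixes g :: "complex \<Rightarrow> complex"
  assumes g: "g holomorphic_on UNIV" and M: "M \<ge> 0"
    and bound: "\<And>w. cmod w \<le> r * real n \<Longrightarrow> cmod ((deriv ^^ k) g w) \<le> M * cmod (g w) ^ 2"
    and C: "C > 0" and \<alpha>: "\<alpha> > 1"
  shows "\<exists>B0. \<forall>B\<ge>B0. \<forall>z\<in>ball 0 r. cmod ((deriv ^^ k) (\<lambda>z. of_real B * g (of_nat n * z)) z)
           / (1 + cmod (of_real B * g (of_nat n * z)) powr \<alpha>) \<le> C"
proof -
  have "bounded (g ` cball 0 (r * real n))"
    by (intro compact_imp_bounded compact_continuous_image holomorphic_on_imp_continuous_on
        holomorphic_on_subset[OF g]) auto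
  then obtain L where "\<forall>x\<in>g ` cball 0 (r * real n). cmod x \<le> L"
    unfolding bounded_iff by blast
  hence L: "\<And>w. cmod w \<le> r * real n \<Longrightarrow> cmod (g w) \<le> L" by auto
  obtain B0 where B0: "B0 > 0" and B0_le: "\<And>B P. B \<ge> B0 \<Longrightarrow> 0 \<le> P \<Longrightarrow> P \<le> L \<Longrightarrow>
      real n ^ k * M * B * P ^ 2 \<le> C * (1 + (B * P) powr \<alpha>)"
    using scaled_square_le_powr[of "real n ^ k * M" C \<alpha> L] M C \<alpha> by auto
  have "cmod ((deriv ^^ k) (\<lambda>z. of_real B * g (of_nat n * z)) z)
          / (1 + cmod (of_real B * g (of_nat n * z)) powr \<alpha>) \<le> C"
    if B: "B \<ge> B0" and z: "z \<in> ball 0 r" for B z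
  proof -
    define w where "w = of_nat n * z"
    have w: "cmod w \<le> r * real n"
      using z mult_right_mono[of "cmod z" r "real n"] by (simp add: w_def norm_mult mult.commute)
    have "cmod ((deriv ^^ k) (\<lambda>z. of_real B * g (of_nat n * z)) z)
          = B * real n ^ k * cmod ((deriv ^^ k) g w)"
      using B B0 by (simp add: higher_deriv_rescale[OF g] w_def norm_mult norm_power)
    also have "\<dots> \<le> B * real n ^ k * (M * cmod (g w) ^ 2)"
      using B B0 bound[OF w] by (intro mult_left_mono) auto
    also have "\<dots> \<le> C * (1 + (B * cmod (g w)) powr \<alpha>)"
      using B0_le[OF B norm_ge_zero L[OF w]] by (simp add: mult_ac)
    finally show ?thesis
      using B B0 by (simp add: w_def norm_mult divide_le_eq add_pos_nonneg mult.commute)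
  qed
  thus ?thesis by blast
qed

section \<open>A criterion for non-quasi-normality\<close>

lemma exists_sin_eq_1_above:
  fixes c x :: real
  assumes "c > 0"
  shows "\<exists>y. x \<le> y \<and> y \<le> x + 2 * pi / c \<and> sin (c * y) = 1"
proof -
  define j where "j = \<lceil>(c * x - pi / 2) / (2 * pi)\<rceil>"
  define y where "y = (2 * pi * j + pi / 2) / c"
  have "(c * x - pi / 2) / (2 * pi) \<le> j" "j < (c * x - pi / 2) / (2 * pi) + 1"
    unfolding j_def by linarith+
  moreover have cy: "c * y = 2 * pi * j + pi / 2" using assms by (simp add: y_def)
  ultimately have "c * x \<le> c * y" "c * y \<le> c * x + 2 * pi"
    by (simp_all add: field_simps)
  moreover have "sin (c * y) = 1"
    using sin_add[of "2 * pi * j" "pi / 2"] by (simp add: cy)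
  ultimately show ?thesis
    using assms by (intro exI[of _ y]) (auto simp: field_simps)
qed

lemma exists_sin_eq_0_below:
  fixes c x :: real
  assumes "c > 0"
  shows "\<exists>w. x - pi / c \<le> w \<and> w \<le> x \<and> sin (c * w) = 0"
proof -
  define i where "i = \<lfloor>c * x / pi\<rfloor>"
  define w where "w = i * pi / c"
  have "i \<le> c * x / pi" "c * x / pi < i + 1"
    unfolding i_def by linarith+
  moreover have cw: "c * w = i * pi" using assms by (simp add: w_def)
  ultimately have "c * w \<le> c * x" "c * x - pi \<le> c * w"
    by (simp_all add: field_simps)
  moreover have "sin (c * w) = 0"
    by (simp add: cw sin_zero_iff_int2)
  ultimately show ?thesis
    using assms by (intro exI[of _ w]) (auto simp: field_simps)
qed

text \<open>If \<open>n \<ge> 3m\<close>, some zero of \<open>sin (n w)\<close> lies within \<open>\<pi>/(3m)\<close> below a maximum of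
  \<open>sin (m w)\<close>, where \<open>sin (m w) \<ge> cos (\<pi>/3)\<close>.\<close>
lemma sin_zero_near_sin_large:
  fixes x0 \<rho> :: real and m n :: nat
  assumes \<rho>: "\<rho> > 0" and m: "8 * pi / \<rho> \<le> m" and n: "3 * m \<le> n"
  shows "\<exists>w::real. \<bar>w - x0\<bar> \<le> \<rho> / 2 \<and> sin (n * w) = 0 \<and> 1/2 \<le> sin (m * w)"
proof -
  have "0 < 8 * pi / \<rho>" using \<rho> by simp
  hence m0: "real m > 0" using m by linarith
  hence n0: "real n > 0" using n by linarith
  obtain y :: real where y: "x0 \<le> y" "y \<le> x0 + 2 * pi / m" "sin (m * y) = 1"
    using exists_sin_eq_1_above[OF m0] by blast
  obtain w :: real where w: "y - pi / n \<le> w" "w \<le> y" "sin (n * w) = 0"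
    using exists_sin_eq_0_below[OF n0] by blast
  have "2 * pi / m \<le> \<rho> / 4" using m m0 \<rho> by (simp add: field_simps)
  moreover have "pi / n \<le> pi / (3 * m)" using n m0 by (intro divide_left_mono) auto
  moreover have "pi / (3 * m) \<le> 2 * pi / m" using m0 by (simp add: field_simps)
  ultimately have close: "\<bar>w - x0\<bar> \<le> \<rho> / 2" using y w by linarith
  have "cos (m * y) = 0" using y(3) sin_cos_squared_add[of "m * y"] by simp
  hence "sin (m * w) = cos (m * (y - w))"
    using sin_diff[of "m * y" "m * (y - w)"] y(3) by (simp add: algebra_simps)
  moreover have "m * (y - w) \<le> pi / 3"
    using mult_left_mono[OF _ less_imp_le[OF m0], of "y - w" "pi / (3 * m)"]
      \<open>pi / n \<le> pi / (3 * m)\<close> w m0 by simp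
  hence "cos (pi / 3) \<le> cos (m * (y - w))"
    using w m0 by (intro cos_monotone_0_pi_le) auto
  ultimately have "1/2 \<le> sin (m * w)" by (simp add: cos_60)
  with close w(3) show ?thesis by blast
qed

lemma chordal_not_close_to_0_and_large:
  assumes y0: "chordal (Some 0) y < 1/4" and ya: "chordal (Some a) y < 1/4" and a: "cmod a \<ge> 10"
  shows False
proof (cases y)
  case None
  thus False using y0 by simp
next
  case (Some x)
  have sqrt_le: "sqrt (1 + (cmod v)\<^sup>2) \<le> 1 + cmod v" for v :: complex
    by (rule real_le_lsqrt) (auto simp: power2_eq_square algebra_simps)
  have "cmod x / sqrt (1 + (cmod x)\<^sup>2) < 1/4" using y0 Some by simp
  hence "cmod x < 1/4 * sqrt (1 + (cmod x)\<^sup>2)"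
    by (simp add: divide_less_eq add_pos_nonneg)
  hence x: "cmod x < 1/3" using sqrt_le[of x] by linarith
  have "sqrt (1 + (cmod a)\<^sup>2) * sqrt (1 + (cmod x)\<^sup>2) \<le> (1 + cmod a) * 2"
    using sqrt_le[of a] sqrt_le[of x] x by (intro mult_mono) auto
  also have "\<dots> \<le> 4 * (cmod a - cmod x)" using a x by simp
  also have "\<dots> \<le> 4 * cmod (a - x)" using norm_triangle_ineq2[of a x] by simp
  moreover have "0 < sqrt (1 + (cmod a)\<^sup>2) * sqrt (1 + (cmod x)\<^sup>2)"
    by (intro mult_pos_pos) (simp_all add: add_pos_nonneg)
  ultimately have "1/4 \<le> cmod (a - x) / (sqrt (1 + (cmod a)\<^sup>2) * sqrt (1 + (cmod x)\<^sup>2))"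
    by (simp add: le_divide_eq)
  thus False using ya Some by simp
qed

lemma cball_avoiding_discrete_set:
  assumes "open D" "compact S" "S \<subseteq> D" "infinite S" and E: "\<forall>z\<in>D. \<not> z islimpt E"
  shows "\<exists>p\<in>S. \<exists>\<rho>>0. cball p \<rho> \<subseteq> D - E"
proof -
  have "finite (E \<inter> S)"
  proof (rule ccontr)
    assume "infinite (E \<inter> S)"
    then obtain x where "x \<in> S" "x islimpt (E \<inter> S)"
      using assms(2) unfolding compact_eq_Bolzano_Weierstrass by blast
    thus False using E assms(3) islimpt_subset[of x "E \<inter> S" E] by blast
  qed
  have "S - E \<noteq> {}"
  proof
    assume "S - E = {}"
    hence "S \<subseteq> E \<inter> S" by blast
    thus False using \<open>finite (E \<inter> S)\<close> assms(4) finite_subset by blast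
  qed
  then obtain p where p: "p \<in> S" "p \<notin> E" by blast
  hence "\<not> p islimpt E" using E assms(3) by blast
  then obtain T where T: "p \<in> T" "open T" "\<And>y. y \<in> E \<Longrightarrow> y \<in> T \<Longrightarrow> y = p"
    unfolding islimpt_def by blast
  moreover have "open (T \<inter> D)" "p \<in> T \<inter> D" using T assms(1,3) p by auto
  ultimately obtain \<rho> where "\<rho> > 0" "cball p \<rho> \<subseteq> T \<inter> D"
    using open_contains_cball by blast
  thus ?thesis using T(3) p by blast
qed

text \<open>Chordally, 0 is more than \<open>1/2\<close> away from every point of modulus \<open>\<ge> 10\<close>, so a sequence
  converging uniformly on a disc cannot, for two late indices, take these values at a common point.\<close>
lemma not_quasi_normal_if_zeros_meet_large_values:
  fixes f :: "nat \<Rightarrow> complex \<Rightarrow> complex"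
  assumes "open D" "compact S" "S \<subseteq> D" "infinite S"
    and meet: "\<And>p \<rho>. p \<in> S \<Longrightarrow> \<rho> > 0 \<Longrightarrow>
      \<exists>m0. \<forall>m\<ge>m0. \<exists>n0. \<forall>n\<ge>n0. \<exists>w\<in>cball p \<rho>. f n w = 0 \<and> 10 \<le> cmod (f m w)"
  shows "\<not> quasi_normal (range f) D"
proof
  assume "quasi_normal (range f) D"
  then obtain r E h where r: "strict_mono r" and E: "\<forall>z\<in>D. \<not> z islimpt E"
    and conv: "sph_loc_unif_conv (\<lambda>n z. Some (f (r n) z)) h (D - E)"
    unfolding quasi_normal_def by blast
  obtain p \<rho> where p: "p \<in> S" and \<rho>: "\<rho> > 0" "cball p \<rho> \<subseteq> D - E"
    using cball_avoiding_discrete_set[OF assms(1-4) E] by blast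
  have "\<forall>e>0. \<forall>\<^sub>F n in sequentially. \<forall>z\<in>cball p \<rho>. chordal (Some (f (r n) z)) (h z) < e"
    using conv \<rho>(2) compact_cball unfolding sph_loc_unif_conv_def by blast
  moreover have "(1/4 :: real) > 0" by simp
  ultimately have "\<forall>\<^sub>F n in sequentially. \<forall>z\<in>cball p \<rho>. chordal (Some (f (r n) z)) (h z) < 1/4"
    by blast
  then obtain N where N: "\<And>n z. n \<ge> N \<Longrightarrow> z \<in> cball p \<rho> \<Longrightarrow> chordal (Some (f (r n) z)) (h z) < 1/4"
    unfolding eventually_sequentially by blast
  obtain m0 where m0: "\<And>m. m \<ge> m0 \<Longrightarrow> \<exists>n0. \<forall>n\<ge>n0. \<exists>w\<in>cball p \<rho>. f n w = 0 \<and> 10 \<le> cmod (f m w)"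
    using meet[OF p \<rho>(1)] by blast
  define i where "i = max N m0"
  obtain n0 where n0: "\<And>n. n \<ge> n0 \<Longrightarrow> \<exists>w\<in>cball p \<rho>. f n w = 0 \<and> 10 \<le> cmod (f (r i) w)"
    using m0[of "r i"] seq_suble[OF r, of i] by (auto simp: i_def)
  define j where "j = max N n0"
  obtain w where w: "w \<in> cball p \<rho>" "f (r j) w = 0" "10 \<le> cmod (f (r i) w)"
    using n0[of "r j"] seq_suble[OF r, of j] by (auto simp: j_def)
  show False
    using chordal_not_close_to_0_and_large[OF _ _ w(3)] N[OF _ w(1), of i] N[OF _ w(1), of j] w(2)
    by (simp add: i_def j_def)
qed

lemma rescaled_zeros_meet_large_values:
  fixes g :: "complex \<Rightarrow> complex" and B :: "nat \<Rightarrow> real"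
  assumes c: "c > 0" and lower: "\<And>y. c * \<bar>sin y\<bar> \<le> cmod (g (of_real y))"
    and zeros: "\<And>y. sin y = 0 \<Longrightarrow> g (of_real y) = 0"
    and B: "\<And>n. 20 / c \<le> B n" and \<rho>: "\<rho> > 0"
  shows "\<exists>m0. \<forall>m\<ge>m0. \<exists>n0. \<forall>n\<ge>n0. \<exists>w\<in>cball (of_real x0) \<rho>.
           of_real (B n) * g (of_nat n * w) = 0 \<and> 10 \<le> cmod (of_real (B m) * g (of_nat m * w))"
proof -
  have "\<exists>w\<in>cball (of_real x0) \<rho>.
          of_real (B n) * g (of_nat n * w) = 0 \<and> 10 \<le> cmod (of_real (B m) * g (of_nat m * w))"
    if m: "nat \<lceil>8 * pi / \<rho>\<rceil> \<le> m" and n: "3 * m \<le> n" for m n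
  proof -
    have "8 * pi / \<rho> \<le> real m" using m by linarith
    then obtain w :: real where w: "\<bar>w - x0\<bar> \<le> \<rho> / 2" "sin (n * w) = 0" "1/2 \<le> sin (m * w)"
      using sin_zero_near_sin_large[OF \<rho> _ n] by blast
    have "of_real w \<in> cball (of_real x0 :: complex) \<rho>"
      using w(1) \<rho> by (simp add: dist_norm abs_minus_commute flip: of_real_diff)
    moreover have "g (of_nat n * of_real w) = 0"
      using zeros[OF w(2)] by simp
    moreover have "10 \<le> cmod (of_real (B m) * g (of_nat m * of_real w))"
    proof -
      have "0 < 20 / c" using c by simp
      hence Bm: "0 \<le> B m" using B[of m] by linarith
      have "10 \<le> 20 / c * (c * \<bar>sin (m * w)\<bar>)" using c w(3) by simp
      also have "\<dots> \<le> B m * cmod (g (of_real (m * w)))"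
        using B[of m] lower[of "m * w"] c Bm by (intro mult_mono) auto
      finally show ?thesis
        using Bm by (simp add: norm_mult)
    qed
    ultimately show ?thesis by auto
  qed
  thus ?thesis by blast
qed

lemma not_quasi_normal_rescaled:
  fixes g :: "complex \<Rightarrow> complex" and B :: "nat \<Rightarrow> real"
  assumes c: "c > 0" and lower: "\<And>y. c * \<bar>sin y\<bar> \<le> cmod (g (of_real y))"
    and zeros: "\<And>y. sin y = 0 \<Longrightarrow> g (of_real y) = 0" and B: "\<And>n. 20 / c \<le> B n"
  shows "\<not> quasi_normal (range (\<lambda>n z. of_real (B n) * g (of_nat n * z))) (ball 0 2)"
proof (rule not_quasi_normal_if_zeros_meet_large_values)
  show "compact (of_real ` {0..1} :: complex set)"
    by (intro compact_continuous_image continuous_intros) auto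
  show "infinite (of_real ` {0..1} :: complex set)"
    by (auto simp: finite_image_iff inj_on_def)
  fix p :: complex and \<rho> :: real
  assume "p \<in> of_real ` {0..1}" and \<rho>: "\<rho> > 0"
  then obtain x0 where "p = of_real x0" by blast
  thus "\<exists>m0. \<forall>m\<ge>m0. \<exists>n0. \<forall>n\<ge>n0. \<exists>w\<in>cball p \<rho>.
          of_real (B n) * g (of_nat n * w) = 0 \<and> 10 \<le> cmod (of_real (B m) * g (of_nat m * w))"
    using rescaled_zeros_meet_large_values[where B = B, OF c lower zeros B \<rho>] by blast
qed auto

section \<open>The extremal function\<close>

definition sin_exp :: "nat \<Rightarrow> complex \<Rightarrow> complex \<Rightarrow> complex" where
  "sin_exp s b z = sin z * exp (b * sin z ^ (2 * s))"

definition fps_exp_sin_pow :: "nat \<Rightarrow> complex \<Rightarrow> complex fps" where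
  "fps_exp_sin_pow s b = fps_exp 1 oo (fps_const b * fps_sin 1 ^ (2 * s))"

lemma has_fps_expansion_sin_exp:
  assumes "s \<ge> 1"
  shows "sin_exp s b has_fps_expansion fps_sin 1 * fps_exp_sin_pow s b"
proof -
  have "(\<lambda>z. b * sin z ^ (2 * s)) has_fps_expansion fps_const b * fps_sin 1 ^ (2 * s)"
    by (intro fps_expansion_intros)
  moreover have "(fps_const b * fps_sin (1::complex) ^ (2 * s)) $ 0 = 0"
    using assms by (simp add: fps_nth_power_0)
  ultimately have "(exp \<circ> (\<lambda>z. b * sin z ^ (2 * s))) has_fps_expansion fps_exp_sin_pow s b"
    unfolding fps_exp_sin_pow_def by (rule has_fps_expansion_compose[OF has_fps_expansion_exp1])
  from has_fps_expansion_mult[OF has_fps_expansion_sin' this] show ?thesis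
    by (simp add: sin_exp_def[abs_def] o_def)
qed

lemma fps_sin_eq_X_times_shift: "fps_sin (1::complex) = fps_X * fps_shift 1 (fps_sin 1)"
proof -
  have "fps_sin (1::complex) \<noteq> 0"
    by (metis fps_sin_nth_1 fps_zero_nth one_neq_zero)
  hence "1 \<le> subdegree (fps_sin (1::complex))"
    by (intro subdegree_geI) auto
  from fps_shift_times_fps_X[OF this] show ?thesis by (simp add: mult.commute)
qed

lemma fps_exp_sin_pow_nth:
  "fps_exp_sin_pow s b $ m = (\<Sum>i=0..m. b ^ i / fact i *
     (if m < 2 * s * i then 0 else (fps_shift 1 (fps_sin 1) ^ (2 * s * i)) $ (m - 2 * s * i)))"
proof -
  have "(fps_const b * fps_sin 1 ^ (2 * s)) ^ i
        = fps_const (b ^ i) * (fps_X ^ (2 * s * i) * fps_shift 1 (fps_sin 1) ^ (2 * s * i))" for i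
    by (subst fps_sin_eq_X_times_shift) (simp add: power_mult_distrib power_mult[symmetric] mult.assoc)
  thus ?thesis
    by (simp add: fps_exp_sin_pow_def fps_compose_nth fps_X_power_mult_nth del: One_nat_def)
qed

text \<open>Since the argument of the exponential starts with \<open>b z\<^sup>2\<^sup>s\<close>, the first
  coefficients of the composition are those of \<open>1 + b z\<^sup>2\<^sup>s\<close>.\<close>
lemma fps_exp_sin_pow_nth_le:
  assumes "s \<ge> 1" "m \<le> 2 * s"
  shows "fps_exp_sin_pow s b $ m = (if m = 0 then 1 else 0) + (if m = 2 * s then b else 0)"
proof -
  have "b ^ i / fact i * (if m < 2 * s * i then 0 else (fps_shift 1 (fps_sin 1) ^ (2 * s * i)) $ (m - 2 * s * i))
        = (if i = 0 \<and> m = 0 then 1 else 0) + (if i = 1 \<and> m = 2 * s then b else 0)" for i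
  proof -
    consider "i = 0" | "i = 1" | "i \<ge> 2" by linarith
    thus ?thesis
    proof cases
      case 3
      hence "2 * s * 2 \<le> 2 * s * i" by simp
      hence "m < 2 * s * i" using assms by linarith
      with 3 show ?thesis by auto
    qed (use assms in \<open>auto simp: fps_nth_power_0\<close>)
  qed
  thus ?thesis
    using assms by (simp add: fps_exp_sin_pow_nth sum.distrib)
qed

lemma fps_sin_exp_nth_odd:
  assumes "s \<ge> 1"
  shows "(fps_sin 1 * fps_exp_sin_pow s b) $ (2 * s + 1) = fps_sin 1 $ (2 * s + 1) + b"
proof -
  have "fps_sin 1 $ j * fps_exp_sin_pow s b $ (2 * s + 1 - j) =
        (if j = 2 * s + 1 then fps_sin 1 $ (2 * s + 1) else 0) + (if j = 1 then b else 0)"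
    if "j \<le> 2 * s + 1" for j
    using that assms by (cases j) (auto simp: fps_exp_sin_pow_nth_le)
  thus ?thesis
    by (simp add: fps_mult_nth sum.distrib)
qed

lemma sin_exp_holomorphic [holomorphic_intros]: "sin_exp s b holomorphic_on A"
  unfolding sin_exp_def[abs_def] by (intro holomorphic_intros)

lemma higher_deriv_sin_exp_0:
  assumes "s \<ge> 1"
  shows "(deriv ^^ n) (sin_exp s b) 0 = (fps_sin 1 * fps_exp_sin_pow s b) $ n * fact n"
  using fps_nth_fps_expansion[OF has_fps_expansion_sin_exp[OF assms]] by simp

lemma higher_deriv_sin_exp_0_even:
  assumes "even n"
  shows "(deriv ^^ n) (sin_exp s b) 0 = 0"
proof -
  have "(deriv ^^ n) (\<lambda>w. sin_exp s b ((-1) * w)) 0 = (-1) ^ n * (deriv ^^ n) (sin_exp s b) ((-1) * 0)"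
    by (rule higher_deriv_compose_linear[OF sin_exp_holomorphic open_UNIV open_UNIV]) auto
  hence "(deriv ^^ n) (sin_exp s b) 0 = (deriv ^^ n) (\<lambda>w. sin_exp s b ((-1) * w)) 0"
    using assms by simp
  also have "(\<lambda>w. sin_exp s b ((-1) * w)) = (\<lambda>w. - sin_exp s b w)"
    by (simp add: sin_exp_def power_mult)
  also have "(deriv ^^ n) \<dots> 0 = - (deriv ^^ n) (sin_exp s b) 0"
    by (rule higher_deriv_uminus[OF sin_exp_holomorphic[of s b UNIV]]) auto
  finally show ?thesis by simp
qed

lemma sin_exp_shift:
  assumes "sin c = 0"
  shows "sin_exp s b (w + c) = cos c * sin_exp s b w"
proof -
  have "cos c ^ 2 = 1" using sin_squared_eq[of c] assms by simp
  hence "sin (w + c) ^ (2 * s) = sin w ^ (2 * s)"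
    by (simp add: sin_add assms power_mult_distrib power_mult)
  thus ?thesis by (simp add: sin_exp_def sin_add assms)
qed

lemma norm_sin_exp_of_real_ge: "\<bar>sin y\<bar> * exp (- cmod b) \<le> cmod (sin_exp s b (of_real y))"
proof -
  have "cmod (b * of_real (sin y) ^ (2 * s)) \<le> cmod b"
    by (simp add: norm_mult norm_power mult_left_le power_le_one)
  hence "exp (- cmod b) \<le> cmod (exp (b * of_real (sin y) ^ (2 * s)))"
    using abs_Re_le_cmod[of "b * of_real (sin y) ^ (2 * s)"] by auto
  thus ?thesis
    by (simp add: sin_exp_def sin_of_real norm_mult mult_left_mono)
qed

text \<open>Choosing \<open>b\<close> to cancel the Taylor coefficient of \<open>z\<^sup>2\<^sup>s\<^sup>+\<^sup>1\<close> of \<open>sin z\<close>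
  makes, together with oddness, both the \<open>k\<close>-th and the \<open>(k+1)\<close>-th derivative vanish at 0.\<close>
definition Psi :: "nat \<Rightarrow> complex \<Rightarrow> complex" where
  "Psi k = sin_exp (k div 2) (- fps_sin 1 $ (2 * (k div 2) + 1))"

lemma Psi_holomorphic [holomorphic_intros]: "Psi k holomorphic_on A"
  unfolding Psi_def by (rule sin_exp_holomorphic)

lemma Psi_eq_0_iff: "Psi k w = 0 \<longleftrightarrow> sin w = 0"
  by (simp add: Psi_def sin_exp_def)

lemma Psi_shift: "sin c = 0 \<Longrightarrow> Psi k (w + c) = cos c * Psi k w"
  by (simp add: Psi_def sin_exp_shift)

lemma Psi_real_lower_bound: "\<exists>c>0. \<forall>y. c * \<bar>sin y\<bar> \<le> cmod (Psi k (of_real y))"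
  using norm_sin_exp_of_real_ge unfolding Psi_def by (metis exp_gt_zero mult.commute)

lemma deriv_Psi_0:
  assumes "k \<ge> 2"
  shows "deriv (Psi k) 0 = 1"
  using higher_deriv_sin_exp_0[of "k div 2" 1] fps_exp_sin_pow_nth_le[of "k div 2" 0] assms
  by (simp add: Psi_def fps_mult_nth_1)

lemma higher_deriv_Psi_0:
  assumes "k \<ge> 2"
  shows "(deriv ^^ k) (Psi k) 0 = 0" "deriv ((deriv ^^ k) (Psi k)) 0 = 0"
proof -
  define s where "s = k div 2"
  have s: "s \<ge> 1" using assms by (simp add: s_def)
  have "(deriv ^^ Suc (2 * s)) (Psi k) 0 = 0"
    using higher_deriv_sin_exp_0[OF s, of "Suc (2 * s)"] fps_sin_exp_nth_odd[OF s]
    by (simp add: Psi_def s_def del: funpow.simps)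
  moreover have "(deriv ^^ n) (Psi k) 0 = 0" if "even n" for n
    unfolding Psi_def by (rule higher_deriv_sin_exp_0_even[OF that])
  moreover have "k = 2 * s \<or> k = Suc (2 * s)" by (auto simp: s_def)
  ultimately have "(deriv ^^ k) (Psi k) 0 = 0 \<and> (deriv ^^ Suc k) (Psi k) 0 = 0"
    by (auto simp del: funpow.simps)
  thus "(deriv ^^ k) (Psi k) 0 = 0" "deriv ((deriv ^^ k) (Psi k)) 0 = 0"
    by auto
qed

text \<open>Every zero \<open>j\<pi>\<close> of \<open>\<Psi>\<close> looks like the zero at 0 up to the unimodular factor \<open>cos (j\<pi>)\<close>, so
  one local estimate covers all of them; away from the zeros, compactness suffices.\<close>
lemma Psi_higher_deriv_le_square:
  assumes "k \<ge> 2"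
  shows "\<exists>M\<ge>0. \<forall>w. cmod w \<le> R \<longrightarrow> cmod ((deriv ^^ k) (Psi k) w) \<le> M * cmod (Psi k w) ^ 2"
proof -
  have hol: "(deriv ^^ k) (Psi k) holomorphic_on UNIV"
    by (rule holomorphic_higher_deriv[OF Psi_holomorphic open_UNIV])
  have "\<exists>\<delta>>0. \<exists>A\<ge>0. \<forall>t. cmod t \<le> \<delta> \<longrightarrow> cmod ((deriv ^^ k) (Psi k) t) \<le> A * cmod (Psi k t) ^ 2"
    by (rule quadratic_bound_near_simple_zero[OF Psi_holomorphic hol])
      (simp_all add: Psi_eq_0_iff deriv_Psi_0 higher_deriv_Psi_0 assms)
  then obtain \<delta> A where \<delta>: "\<delta> > 0" and A: "A \<ge> 0"
    and near0: "\<And>t. cmod t \<le> \<delta> \<Longrightarrow> cmod ((deriv ^^ k) (Psi k) t) \<le> A * cmod (Psi k t) ^ 2"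
    by blast
  define Z where "Z = (\<Union>j::int. ball (of_real (of_int j * pi) :: complex) \<delta>)"
  have "compact (cball 0 R - Z)"
    unfolding Z_def by (intro compact_diff) auto
  moreover have "Psi k w \<noteq> 0" if "w \<in> cball 0 R - Z" for w
  proof
    assume "Psi k w = 0"
    then obtain j :: int where "w = of_real (j * pi)" by (auto simp: Psi_eq_0_iff sin_eq_0)
    hence "w \<in> Z" using \<delta> unfolding Z_def by (auto intro!: exI[of _ j])
    with that show False by simp
  qed
  ultimately obtain M where M: "M \<ge> 0"
    and far: "\<And>w. w \<in> cball 0 R - Z \<Longrightarrow> cmod ((deriv ^^ k) (Psi k) w) \<le> M * cmod (Psi k w) ^ 2"
    using compact_bound_by_square[of "cball 0 R - Z" "(deriv ^^ k) (Psi k)" "Psi k"]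
      holomorphic_on_imp_continuous_on[OF holomorphic_on_subset[OF hol]]
      holomorphic_on_imp_continuous_on[OF Psi_holomorphic]
    by blast
  have "cmod ((deriv ^^ k) (Psi k) w) \<le> max A M * cmod (Psi k w) ^ 2" if "cmod w \<le> R" for w
  proof (cases "w \<in> Z")
    case True
    then obtain j :: int where j: "dist (of_real (of_int j * pi)) w < \<delta>"
      by (auto simp: Z_def)
    define c :: complex where "c = of_real (of_int j * pi)"
    have c: "sin c = 0" by (auto simp: c_def sin_eq_0)
    hence "cmod (cos c) ^ 2 = 1"
      using sin_squared_eq[of c] by (simp flip: norm_power)
    hence cos_c: "cmod (cos c) = 1"
      using norm_ge_zero[of "cos c"] by (auto simp: power2_eq_1_iff)
    define t where "t = w - c"
    have w: "w = t + c" by (simp add: t_def)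
    have "cmod t \<le> \<delta>" using j by (simp add: t_def c_def dist_norm norm_minus_commute)
    have "cmod ((deriv ^^ k) (Psi k) w) = cmod ((deriv ^^ k) (Psi k) t)"
      unfolding w higher_deriv_shift_eq_cmult[OF Psi_holomorphic Psi_shift[OF c]]
      by (simp add: norm_mult cos_c)
    also have "\<dots> \<le> A * cmod (Psi k t) ^ 2" by (rule near0) fact
    also have "\<dots> = A * cmod (Psi k w) ^ 2" by (simp add: w Psi_shift[OF c] norm_mult cos_c)
    also have "\<dots> \<le> max A M * cmod (Psi k w) ^ 2" by (simp add: mult_right_mono)
    finally show ?thesis .
  next
    case False
    with that have "cmod ((deriv ^^ k) (Psi k) w) \<le> M * cmod (Psi k w) ^ 2" by (intro far) simp
    also have "\<dots> \<le> max A M * cmod (Psi k w) ^ 2" by (simp add: mult_right_mono)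
    finally show ?thesis .
  qed
  thus ?thesis using A by (intro exI[of _ "max A M"]) auto
qed

theorem mainTheorem2:
  fixes k :: nat and \<alpha> C :: real
  assumes "k \<ge> 2" and "\<alpha> > 1" and "C > 0"
  shows "\<exists>f :: nat \<Rightarrow> complex \<Rightarrow> complex.
           (\<forall>n. f n holomorphic_on ball 0 2) \<and>
           (\<forall>n. \<forall>z\<in>ball 0 2.
              cmod ((deriv ^^ k) (f n) z) / (1 + cmod (f n z) powr \<alpha>) \<le> C) \<and>
           \<not> quasi_normal (range f) (ball 0 2)"
proof -
  obtain c where c: "c > 0" "\<And>y. c * \<bar>sin y\<bar> \<le> cmod (Psi k (of_real y))"
    using Psi_real_lower_bound by blast
  have "\<exists>B0. \<forall>B\<ge>B0. \<forall>z\<in>ball 0 2. cmod ((deriv ^^ k) (\<lambda>z. of_real B * Psi k (of_nat n * z)) z)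
          / (1 + cmod (of_real B * Psi k (of_nat n * z)) powr \<alpha>) \<le> C" for n
    using Psi_higher_deriv_le_square[OF assms(1), of "2 * real n"]
      rescaled_higher_deriv_bound[OF Psi_holomorphic _ _ assms(3,2)] by blast
  then obtain B0 where B0: "\<And>n B. B \<ge> B0 n \<Longrightarrow> \<forall>z\<in>ball 0 2.
      cmod ((deriv ^^ k) (\<lambda>z. of_real B * Psi k (of_nat n * z)) z)
        / (1 + cmod (of_real B * Psi k (of_nat n * z)) powr \<alpha>) \<le> C"
    by metis
  define B where "B n = max (B0 n) (20 / c)" for n
  define f where "f n z = of_real (B n) * Psi k (of_nat n * z)" for n z
  have "f n holomorphic_on ball 0 2" for n
    unfolding f_def by (intro holomorphic_intros holomorphic_on_rescale Psi_holomorphic)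
  moreover have "\<forall>z\<in>ball 0 2. cmod ((deriv ^^ k) (f n) z) / (1 + cmod (f n z) powr \<alpha>) \<le> C" for n
    using B0[of n "B n"] by (simp add: B_def f_def[abs_def])
  moreover have "\<not> quasi_normal (range f) (ball 0 2)"
    unfolding f_def[abs_def] using c
    by (intro not_quasi_normal_rescaled) (auto simp: B_def Psi_eq_0_iff sin_of_real)
  ultimately show ?thesis by blast
qed

end
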